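(* Let $(\mathbb S,+,\cdot)$ be an Essential S-Structure with Base Unit $A$. If $s,t\in\mathbb S$ with $s=x-1+y\cdot A$ and $t=u-1+v\cdot A$ for some $y,v\in\Lambda$ and $x,u\in\mathbb S_0$, then $s+t=(x+u)-1+(y+v)\cdot A$.
   Context: An S-Structure is a triple $(\mathbb S,+,\cdot)$ where $\mathbb S$ is a set and $+,\cdot$ are binary operations on $\mathbb S$ such that: $(\mathbb S,+)$ is a commutative group with identity $0$ (the inverse of $s$ is written $-s$, and $s-t:=s+(-t)$); $\mathbb S$ is closed under $\cdot$; and there exists $s\in\mathbb S$ with $0\cdot s\neq 0$ or $s\cdot 0\neq 0$. Multiplication binds tighter than addition. The structures considered come with a distinguished element of $\mathbb S$ denoted $1$. It is Commutative if $s\cdot t=t\cdot s$ for all $s,t$. For a Commutative S-Structure and $\alpha\in\mathbb S$, put $\mathbb S_\alpha=\{s\in\mathbb S:0\cdot s=s\cdot 0=\alpha\}$ and $\Lambda=\{\alpha\in\mathbb S:\mathbb S_\alpha\neq\emptyset\}$. Wheel Distributive: $s\cdot(t+r)+(s\cdot 0)=(s\cdot t)+(s\cdot r)$ for all $s,t,r\in\mathbb S$. S-Associative: for all $m,n\in\mathbb S_0$ and $s\in\mathbb S$, $m\cdot(n\cdot s)=(m\cdot n)\cdot s-([(m-1)\cdot(n-1)]\cdot(0\cdot s))$. Base: if $\mathbb S_0\neq\emptyset$ and $\alpha\in\Lambda$, $q\in\mathbb S_\alpha$ is a Base for $\mathbb S_\alpha$ if $q+\beta\in\mathbb S_\alpha$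 for all $\beta\in\mathbb S_0$ and every $s\in\mathbb S_\alpha$ equals $q+\beta$ for some $\beta\in\mathbb S_0$. Coordinated: $\mathbb S_0\neq\emptyset$ and every $\mathbb S_\alpha$ with $\alpha\in\Lambda$ has a Base. Standard Bases: a Coordinated Commutative S-Structure has Standard Bases if there is a specified element $q_0(1)\in\mathbb S_1$ which is a Base for $\mathbb S_1$, and for every $\alpha\in\Lambda$ the element $q_0(\alpha):=\alpha\cdot(q_0(1)+1)-1$ lies in $\mathbb S_\alpha$ and is a Base for $\mathbb S_\alpha$. The Base Unit is $A:=q_0(1)+1$. An Essential S-Structure is an S-Structure that is Commutative, Wheel Distributive, S-Associative, has Standard Bases (in particular is Coordinated), satisfies $0,1\in\mathbb S_0$, and satisfies $\mathbb S_0=\{1\cdot x:x\in\mathbb S_0\}$. *)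

theory Defs
  imports Main
begin

text \<open>An S-Structure is modelled on a type 'a: the carrier is UNIV, (+,0,-) is the
commutative group (class ab_group_add), the multiplication is the operation of class
times (closure is automatic), and the distinguished element 1 is the constant of class one.
The specified element q0(1) of the Standard Bases is an explicit parameter q1.\<close>

definition S_structure :: "'a::{ab_group_add,times,one} itself \<Rightarrow> bool" where
  "S_structure T \<longleftrightarrow> (\<exists>s::'a. 0 * s \<noteq> 0 \<or> s * 0 \<noteq> 0)"

definition commutative_S :: "'a::{ab_group_add,times,one} itself \<Rightarrow> bool" where
  "commutative_S T \<longleftrightarrow> (\<forall>s t::'a. s * t = t * s)"

definition S_sub :: "'a::{ab_group_add,times,one} \<Rightarrow> 'a set" where
  "S_sub \<alpha> = {s. 0 * s = \<alpha> \<and> s * 0 = \<alpha>}"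

definition Lambda :: "'a::{ab_group_add,times,one} set" where
  "Lambda = {\<alpha>. S_sub \<alpha> \<noteq> {}}"

definition wheel_distributive :: "'a::{ab_group_add,times,one} itself \<Rightarrow> bool" where
  "wheel_distributive T \<longleftrightarrow> (\<forall>s t r::'a. s * (t + r) + s * 0 = s * t + s * r)"

definition S_associative :: "'a::{ab_group_add,times,one} itself \<Rightarrow> bool" where
  "S_associative T \<longleftrightarrow> (\<forall>m\<in>S_sub (0::'a). \<forall>n\<in>S_sub (0::'a). \<forall>s::'a.
      m * (n * s) = (m * n) * s - (((m - 1) * (n - 1)) * (0 * s)))"

definition is_S_base :: "'a::{ab_group_add,times,one} \<Rightarrow> 'a \<Rightarrow> bool" where
  "is_S_base q \<alpha> \<longleftrightarrow> S_sub (0::'a) \<noteq> {} \<and> \<alpha> \<in> Lambda \<and> q \<in> S_sub \<alpha> \<and>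
     (\<forall>\<beta>\<in>S_sub 0. q + \<beta> \<in> S_sub \<alpha>) \<and>
     (\<forall>s\<in>S_sub \<alpha>. \<exists>\<beta>\<in>S_sub 0. s = q + \<beta>)"

definition coordinated :: "'a::{ab_group_add,times,one} itself \<Rightarrow> bool" where
  "coordinated T \<longleftrightarrow> S_sub (0::'a) \<noteq> {} \<and> (\<forall>\<alpha>\<in>(Lambda::'a set). \<exists>q::'a. is_S_base q \<alpha>)"

definition q0 :: "'a::{ab_group_add,times,one} \<Rightarrow> 'a \<Rightarrow> 'a" where
  "q0 q1 \<alpha> = \<alpha> * (q1 + 1) - 1"

definition standard_bases :: "'a::{ab_group_add,times,one} \<Rightarrow> bool" where
  "standard_bases q1 \<longleftrightarrow> coordinated TYPE('a) \<and> commutative_S TYPE('a) \<and>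
     q1 \<in> S_sub 1 \<and> is_S_base q1 1 \<and>
     (\<forall>\<alpha>\<in>Lambda. q0 q1 \<alpha> \<in> S_sub \<alpha> \<and> is_S_base (q0 q1 \<alpha>) \<alpha>)"

definition base_unit :: "'a::{ab_group_add,times,one} \<Rightarrow> 'a" where
  "base_unit q1 = q1 + 1"

definition essential_S :: "'a::{ab_group_add,times,one} \<Rightarrow> bool" where
  "essential_S q1 \<longleftrightarrow> S_structure TYPE('a) \<and> commutative_S TYPE('a) \<and>
     wheel_distributive TYPE('a) \<and> S_associative TYPE('a) \<and> standard_bases q1 \<and>
     coordinated TYPE('a) \<and> (0::'a) \<in> S_sub 0 \<and> (1::'a) \<in> S_sub 0 \<and>
     S_sub (0::'a) = {1 * x | x. x \<in> S_sub 0}"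

end

theory Submission
  imports Defs
begin

text \<open>Since 0 * q1 = 1 and 0 * 1 = 0 * 0 = 0, wheel distributivity gives A * 0 = 1 for the
  Base Unit A = q1 + 1. Wheel distributivity then says that multiplication by A is additive up to
  the correction term A * 0 = 1, which is exactly the shift by -1.\<close>

lemma wheel_distrib_right:
  fixes a b c :: "'a::{ab_group_add,times,one}"
  assumes "wheel_distributive TYPE('a)" and "commutative_S TYPE('a)"
  shows "(a + b) * c = a * c + b * c - c * 0"
proof -
  have "c * (a + b) + c * 0 = c * a + c * b"
    using assms(1) unfolding wheel_distributive_def by blast
  then show ?thesis
    using assms(2) unfolding commutative_S_def by (metis add_diff_cancel)
qed

lemma base_unit_times_zero:
  fixes q1 :: "'a::{ab_group_add,times,one}"
  assumes "wheel_distributive TYPE('a)" and "commutative_S TYPE('a)"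
    and "q1 \<in> S_sub 1" and "0 \<in> S_sub (0::'a)" and "1 \<in> S_sub (0::'a)"
  shows "base_unit q1 * 0 = 1"
proof -
  have "0 * (q1 + 1) + 0 * 0 = 0 * q1 + (0::'a) * 1"
    using assms(1) unfolding wheel_distributive_def by blast
  then have "(0::'a) * (q1 + 1) = 1"
    using assms(3-5) unfolding S_sub_def by simp
  then show ?thesis
    using assms(2) unfolding base_unit_def commutative_S_def by metis
qed

theorem proposition3p1p6:
  fixes q1 :: "'a::{ab_group_add,times,one}"
    and s t x y u v :: 'a
  assumes "essential_S q1"
    and "y \<in> Lambda" and "v \<in> Lambda"
    and "x \<in> S_sub 0" and "u \<in> S_sub 0"
    and "s = x - 1 + y * base_unit q1"
    and "t = u - 1 + v * base_unit q1"
  shows "s + t = (x + u) - 1 + (y + v) * base_unit q1"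
proof -
  have wd: "wheel_distributive TYPE('a)" and comm: "commutative_S TYPE('a)"
    using assms(1) unfolding essential_S_def by blast+
  have "base_unit q1 * 0 = 1"
    using base_unit_times_zero[OF wd comm] assms(1)
    unfolding essential_S_def standard_bases_def by blast
  then have "(y + v) * base_unit q1 = y * base_unit q1 + v * base_unit q1 - 1"
    using wheel_distrib_right[OF wd comm] by simp
  then show ?thesis
    unfolding assms(6,7) by (simp add: algebra_simps)
qed

end
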